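(* The map $\varphi:\mathbb{C}S_\infty\to\mathbb{C}(BC*S_\infty)$ is injective.
   Context: $BC$ is the bicyclic monoid $\langle p,q : pq=e\rangle$ with involution $p^*=q$. $S_\infty$ is the free monoid on $\{t_n,t_n^*: n\in\mathbb{N}\}$ with involution $t_n\mapsto t_n^*$. $BC*S_\infty$ is the free product of monoids, with the involution $(s_1t_1\cdots s_nt_n)^*=t_n^*s_n^*\cdots t_1^*s_1^*$. For a monoid $S$ with involution, $\mathbb{C}S$ is the semigroup algebra with basis $\{\delta_s:s\in S\}$, $\delta_s\delta_t=\delta_{st}$, $\delta_s^*=\delta_{s^*}$. Fix a C*-norm $\|\cdot\|$ on $\mathbb{C}(BC*S_\infty)$ (i.e. a norm whose completion is a C*-algebra containing $\mathbb{C}(BC*S_\infty)$ as a $*$-subalgebra). Let $\gamma_n=(n\|\delta_{t_n}\|)^{-1}$ and $a_n=\delta_p+\gamma_n\delta_{t_n}$ for $n\in\mathbb{N}$, and let $\varphi:\mathbb{C}S_\infty\to\mathbb{C}(BC*S_\infty)$ be the unique unital $*$-homomorphism with $\varphi(\delta_{t_n})=a_n$ for all $n\in\mathbb{N}$. *)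

theory Defs
  imports Complex_Main "HOL-Library.Function_Algebras"
begin

typedef posnat = "{n::nat. 0 < n}" morphisms nat_of Abs_posnat
  by auto

datatype sgen = T posnat | Ts posnat   (* T n = t_n,  Ts n = t_n^* *)

(* S_infinity = sgen list, product = append, unit = [] *)

fun sgen_inv :: "sgen \<Rightarrow> sgen" where
  "sgen_inv (T n) = Ts n"
| "sgen_inv (Ts n) = T n"

definition sinv :: "sgen list \<Rightarrow> sgen list" where
  "sinv w = rev (map sgen_inv w)"

text \<open>BC * S_infinity has the presentation  < p, q, t_n, t_n^* | pq = e >.
  Its elements are represented by their normal forms: words over
  {p, q, t_n, t_n^*} containing no factor p q.\<close>

datatype bsym = P | Q | L sgen

fun red :: "bsym list \<Rightarrow> bsym list" where
  "red [] = []"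
| "red (x # xs) = (case red xs of
       [] \<Rightarrow> [x]
     | (y # ys) \<Rightarrow> (if x = P \<and> y = Q then ys else x # y # ys))"

definition BCS :: "bsym list set" where
  "BCS = {w. red w = w}"

definition bmul :: "bsym list \<Rightarrow> bsym list \<Rightarrow> bsym list" where
  "bmul u v = red (u @ v)"

fun bsym_inv :: "bsym \<Rightarrow> bsym" where
  "bsym_inv P = Q"
| "bsym_inv Q = P"
| "bsym_inv (L a) = L (sgen_inv a)"

definition binv :: "bsym list \<Rightarrow> bsym list" where
  "binv w = rev (map bsym_inv w)"

definition supp :: "('a \<Rightarrow> complex) \<Rightarrow> 'a set" where
  "supp f = {x. f x \<noteq> 0}"

definition alg :: "'a set \<Rightarrow> ('a \<Rightarrow> complex) set" where
  "alg M = {f. finite (supp f) \<and> supp f \<subseteq> M}"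

definition delta :: "'a \<Rightarrow> ('a \<Rightarrow> complex)" where
  "delta s = (\<lambda>x. if x = s then 1 else 0)"

definition conv :: "('a \<Rightarrow> 'a \<Rightarrow> 'a) \<Rightarrow> ('a \<Rightarrow> complex) \<Rightarrow> ('a \<Rightarrow> complex) \<Rightarrow> ('a \<Rightarrow> complex)" where
  "conv m f g = (\<lambda>s. \<Sum>(u, v) \<in> {(u, v). u \<in> supp f \<and> v \<in> supp g \<and> m u v = s}. f u * g v)"

definition astar :: "('a \<Rightarrow> 'a) \<Rightarrow> ('a \<Rightarrow> complex) \<Rightarrow> ('a \<Rightarrow> complex)" where
  "astar i f = (\<lambda>s. cnj (f (i s)))"

definition smul :: "complex \<Rightarrow> ('a \<Rightarrow> complex) \<Rightarrow> ('a \<Rightarrow> complex)" where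
  "smul c f = (\<lambda>s. c * f s)"

text \<open>A C*-norm on the *-algebra CM: a norm which is submultiplicative and
  satisfies the C*-identity (equivalently, its completion is a C*-algebra
  containing CM as a *-subalgebra).\<close>

definition cstar_norm :: "('a \<Rightarrow> 'a \<Rightarrow> 'a) \<Rightarrow> ('a \<Rightarrow> 'a) \<Rightarrow> 'a set
    \<Rightarrow> (('a \<Rightarrow> complex) \<Rightarrow> real) \<Rightarrow> bool" where
  "cstar_norm m i M N \<longleftrightarrow>
     (\<forall>x\<in>alg M. 0 \<le> N x \<and> (N x = 0 \<longleftrightarrow> x = 0)) \<and>
     (\<forall>x\<in>alg M. \<forall>y\<in>alg M. N (x + y) \<le> N x + N y) \<and>
     (\<forall>c. \<forall>x\<in>alg M. N (smul c x) = cmod c * N x) \<and>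
     (\<forall>x\<in>alg M. \<forall>y\<in>alg M. N (conv m x y) \<le> N x * N y) \<and>
     (\<forall>x\<in>alg M. N (conv m (astar i x) x) = (N x)\<^sup>2)"

definition gam :: "((bsym list \<Rightarrow> complex) \<Rightarrow> real) \<Rightarrow> posnat \<Rightarrow> real" where
  "gam N n = 1 / (real (nat_of n) * N (delta [L (T n)]))"

definition aelt :: "((bsym list \<Rightarrow> complex) \<Rightarrow> real) \<Rightarrow> posnat \<Rightarrow> (bsym list \<Rightarrow> complex)" where
  "aelt N n = delta [P] + smul (complex_of_real (gam N n)) (delta [L (T n)])"

fun gen_img :: "((bsym list \<Rightarrow> complex) \<Rightarrow> real) \<Rightarrow> sgen \<Rightarrow> (bsym list \<Rightarrow> complex)" where
  "gen_img N (T n) = aelt N n"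
| "gen_img N (Ts n) = astar binv (aelt N n)"

fun word_img :: "((bsym list \<Rightarrow> complex) \<Rightarrow> real) \<Rightarrow> sgen list \<Rightarrow> (bsym list \<Rightarrow> complex)" where
  "word_img N [] = delta []"
| "word_img N (a # w) = conv bmul (gen_img N a) (word_img N w)"

text \<open>phi: the unique unital *-homomorphism C S_infinity -> C(BC * S_infinity)
  with phi(delta_{t_n}) = a_n, extended linearly.\<close>
definition phi :: "((bsym list \<Rightarrow> complex) \<Rightarrow> real) \<Rightarrow> (sgen list \<Rightarrow> complex) \<Rightarrow> (bsym list \<Rightarrow> complex)" where
  "phi N f = (\<Sum>w \<in> supp f. smul (f w) (word_img N w))"

end

theory Submission
  imports Defs
begin

text \<open>Expanding \<open>\<phi>(\<delta>\<^sub>w)\<close> for a word \<open>w\<close> of \<open>S\<^sub>\<infinity>\<close> gives a linear combination of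
  words of \<open>BC * S\<^sub>\<infinity>\<close>, each containing at most \<open>|w|\<close> letters \<open>t\<^sub>n, t\<^sub>n\<^sup>*\<close>, because the
  relation \<open>pq = e\<close> never creates or destroys such letters.  The only word with
  exactly \<open>|w|\<close> of them is \<open>w\<close> itself, with coefficient a product of the nonzero
  scalars \<open>\<gamma>\<^sub>n\<close>.  If \<open>\<phi> f = \<phi> g\<close> with \<open>f \<noteq> g\<close>, evaluating at a longest word on which
  \<open>f\<close> and \<open>g\<close> differ therefore gives a contradiction.\<close>

definition letter_count :: "bsym list \<Rightarrow> nat" where
  "letter_count u = length (filter (\<lambda>x. x \<noteq> P \<and> x \<noteq> Q) u)"

lemma letter_count_red [simp]: "letter_count (red xs) = letter_count xs"
proof (induction xs)
  case (Cons x xs)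
  then show ?case by (cases "red xs") (auto simp: letter_count_def)
qed simp

lemma letter_count_bmul: "letter_count (bmul u v) = letter_count u + letter_count v"
  unfolding bmul_def letter_count_red by (simp add: letter_count_def)

lemma letter_count_map_L [simp]: "letter_count (map L w) = length w"
  by (simp add: letter_count_def comp_def)

lemma red_map_L [simp]: "red (map L w) = map L w"
  by (induction w) (auto split: list.splits)

lemma bmul_map_L: "bmul (map L v) (map L w) = map L (v @ w)"
  by (simp add: bmul_def flip: map_append)

lemma binv_binv [simp]: "binv (binv u) = u"
proof -
  have "sgen_inv (sgen_inv a) = a" for a
    by (cases a) simp_all
  then have "bsym_inv (bsym_inv x) = x" for x
    by (cases x) simp_all
  then show ?thesis by (simp add: binv_def rev_map comp_def)
qed

lemma binv_singleton [simp]: "binv [x] = [bsym_inv x]"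
  by (simp add: binv_def)

lemma conv_nonzeroE:
  assumes "conv m f g s \<noteq> 0"
  obtains u v where "f u \<noteq> 0" "g v \<noteq> 0" "m u v = s"
proof -
  have "{(u, v). u \<in> supp f \<and> v \<in> supp g \<and> m u v = s} \<noteq> {}"
    using assms unfolding conv_def by (metis sum.empty)
  then show ?thesis using that by (auto simp: supp_def)
qed

lemma conv_unique_pair:
  assumes "m u\<^sub>0 v\<^sub>0 = s"
    and "\<And>u v. f u \<noteq> 0 \<Longrightarrow> g v \<noteq> 0 \<Longrightarrow> m u v = s \<Longrightarrow> u = u\<^sub>0 \<and> v = v\<^sub>0"
  shows "conv m f g s = f u\<^sub>0 * g v\<^sub>0"
proof -
  let ?S = "{(u, v). u \<in> supp f \<and> v \<in> supp g \<and> m u v = s}"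
  have "(\<Sum>(u, v)\<in>?S. f u * g v) = (\<Sum>(u, v)\<in>{(u\<^sub>0, v\<^sub>0)}. f u * g v)"
    by (rule sum.mono_neutral_left) (use assms in \<open>auto simp: supp_def\<close>)
  then show ?thesis by (simp add: conv_def)
qed

lemma gen_img_nonzero_cases:
  assumes "gen_img N a u \<noteq> 0"
  shows "u = [P] \<or> u = [Q] \<or> u = [L a]"
proof (cases a)
  case (T n)
  with assms show ?thesis by (auto simp: aelt_def delta_def smul_def split: if_splits)
next
  case (Ts n)
  with assms have "binv u = [P] \<or> binv u = [L (T n)]"
    by (auto simp: astar_def aelt_def delta_def smul_def split: if_splits)
  then have "u = binv [P] \<or> u = binv [L (T n)]"
    by (metis binv_binv)
  with Ts show ?thesis by simp
qed

lemma letter_count_gen_img: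
  "gen_img N a u \<noteq> 0 \<Longrightarrow> letter_count u \<le> 1"
  using gen_img_nonzero_cases[of N a u] by (auto simp: letter_count_def)

lemma gen_img_letter_eq:
  "gen_img N a [L a] = complex_of_real (gam N (case a of T n \<Rightarrow> n | Ts n \<Rightarrow> n))"
  by (cases a) (simp_all add: astar_def aelt_def delta_def smul_def)

lemma gam_neq_0:
  assumes "cstar_norm bmul binv BCS N"
  shows "gam N n \<noteq> 0"
proof -
  have "delta [L (T n)] \<in> alg BCS"
    by (auto simp: alg_def supp_def delta_def BCS_def)
  moreover have "delta [L (T n)] \<noteq> (0 :: bsym list \<Rightarrow> complex)"
    by (metis delta_def one_neq_zero zero_fun_apply)
  ultimately have "N (delta [L (T n)]) \<noteq> 0"
    using assms unfolding cstar_norm_def by blast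
  moreover have "nat_of n \<noteq> 0"
    using nat_of[of n] by simp
  ultimately show ?thesis by (simp add: gam_def)
qed

lemma letter_count_word_img:
  "word_img N w u \<noteq> 0 \<Longrightarrow> letter_count u \<le> length w"
proof (induction w arbitrary: u)
  case Nil
  then show ?case by (simp add: delta_def letter_count_def split: if_splits)
next
  case (Cons a w)
  then obtain u' v where "gen_img N a u' \<noteq> 0" "word_img N w v \<noteq> 0" "bmul u' v = u"
    by (auto elim: conv_nonzeroE)
  with Cons.IH show ?case
    using letter_count_gen_img letter_count_bmul by fastforce
qed

lemma word_img_top_degree:
  assumes "letter_count u = length w"
  shows "word_img N w u = (if u = map L w then (\<Prod>a\<leftarrow>w. gen_img N a [L a]) else 0)"
  using assms
proof (induction w arbitrary: u)
  case Nil
  then show ?case by (simp add: delta_def letter_count_def filter_empty_conv)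
next
  case (Cons a w)
  have unique: "u' = [L a] \<and> v = map L w"
    if nz: "gen_img N a u' \<noteq> 0" "word_img N w v \<noteq> 0" and u: "bmul u' v = u" for u' v
  proof -
    have "letter_count u' \<le> 1" "letter_count v \<le> length w"
      using letter_count_gen_img[OF nz(1)] letter_count_word_img[OF nz(2)] .
    with Cons.prems u have "letter_count u' = 1" "letter_count v = length w"
      by (auto simp: letter_count_bmul)
    with nz Cons.IH show ?thesis
      using gen_img_nonzero_cases[OF nz(1)] by (auto simp: letter_count_def split: if_splits)
  qed
  show ?case
  proof (cases "u = map L (a # w)")
    case True
    have "bmul [L a] (map L w) = u"
      using True bmul_map_L[of "[a]" w] by simp
    then have "word_img N (a # w) u = gen_img N a [L a] * word_img N w (map L w)"
      using conv_unique_pair[of bmul "[L a]" "map L w" u "gen_img N a" "word_img N w"] unique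
      by simp
    with True Cons.IH[of "map L w"] show ?thesis
      by simp
  next
    case False
    have "word_img N (a # w) u = 0"
    proof (rule ccontr)
      assume "word_img N (a # w) u \<noteq> 0"
      then obtain u' v where "gen_img N a u' \<noteq> 0" "word_img N w v \<noteq> 0" "bmul u' v = u"
        by (auto elim: conv_nonzeroE)
      with unique[OF this] False show False
        using bmul_map_L[of "[a]" w] by simp
    qed
    with False show ?thesis by simp
  qed
qed

lemma word_img_at_letters_eq_0:
  assumes "length v \<le> length w" "v \<noteq> w"
  shows "word_img N v (map L w) = 0"
proof (cases "length v = length w")
  case True
  have "map L w \<noteq> map L v"
    using assms(2) by (auto dest: map_injective simp: inj_def)
  with True show ?thesis by (simp add: word_img_top_degree)
next
  case False
  with assms(1) show ?thesis
    using letter_count_word_img[of N v "map L w"] by fastforce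
qed

lemma word_img_at_letters_neq_0:
  assumes "cstar_norm bmul binv BCS N"
  shows "word_img N w (map L w) \<noteq> 0"
  using gam_neq_0[OF assms]
  by (auto simp: word_img_top_degree prod_list_zero_iff gen_img_letter_eq split: sgen.splits)

lemma phi_apply:
  assumes "finite D" "supp f \<subseteq> D"
  shows "phi N f s = (\<Sum>w\<in>D. f w * word_img N w s)"
proof -
  have "(\<Sum>w\<in>A. F w) s = (\<Sum>w\<in>A. F w s)" for A and F :: "sgen list \<Rightarrow> bsym list \<Rightarrow> complex"
    by (induction A rule: infinite_finite_induct) auto
  then have "phi N f s = (\<Sum>w\<in>supp f. f w * word_img N w s)"
    by (simp add: phi_def smul_def)
  also have "\<dots> = (\<Sum>w\<in>D. f w * word_img N w s)"
    by (rule sum.mono_neutral_left) (use assms in \<open>auto simp: supp_def\<close>)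
  finally show ?thesis .
qed

lemma sum_word_img_at_longest:
  assumes "finite D" "w \<in> D" "\<And>v. v \<in> D \<Longrightarrow> c v \<noteq> 0 \<Longrightarrow> length v \<le> length w"
  shows "(\<Sum>v\<in>D. c v * word_img N v (map L w)) = c w * word_img N w (map L w)"
proof -
  have "c v * word_img N v (map L w) = 0" if "v \<in> D - {w}" for v
    using assms(3) that by (cases "c v = 0") (auto simp: word_img_at_letters_eq_0)
  then have "(\<Sum>v\<in>D - {w}. c v * word_img N v (map L w)) = 0"
    by (intro sum.neutral ballI)
  with assms(1,2) show ?thesis by (simp add: sum.remove)
qed

lemma finite_longest_word:
  assumes "finite E" "E \<noteq> {}"
  obtains w where "w \<in> E" "\<And>v. v \<in> E \<Longrightarrow> length v \<le> length w"
proof -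
  have "Max (length ` E) \<in> length ` E"
    using assms by (intro Max_in) auto
  then obtain w where "w \<in> E" "length w = Max (length ` E)"
    by auto
  with assms that show ?thesis by simp
qed

theorem corollary3p3:
  fixes N :: "(bsym list \<Rightarrow> complex) \<Rightarrow> real"
  assumes "cstar_norm bmul binv BCS N"
  shows "inj_on (phi N) (alg (UNIV :: sgen list set))"
proof (rule inj_onI, rule ccontr)
  fix f g :: "sgen list \<Rightarrow> complex"
  assume "f \<in> alg UNIV" "g \<in> alg UNIV" "phi N f = phi N g" "f \<noteq> g"
  define D where "D = supp f \<union> supp g"
  define E where "E = {w \<in> D. f w \<noteq> g w}"
  have "finite D" using \<open>f \<in> alg UNIV\<close> \<open>g \<in> alg UNIV\<close> by (simp add: D_def alg_def)
  then have "finite E" by (simp add: E_def)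
  moreover have "E \<noteq> {}" using \<open>f \<noteq> g\<close> by (force simp: E_def D_def supp_def fun_eq_iff)
  ultimately obtain w where "w \<in> E" and longest: "\<And>v. v \<in> E \<Longrightarrow> length v \<le> length w"
    using finite_longest_word by blast
  have "0 = phi N f (map L w) - phi N g (map L w)"
    using \<open>phi N f = phi N g\<close> by simp
  also have "\<dots> = (\<Sum>v\<in>D. (f v - g v) * word_img N v (map L w))"
    using phi_apply[OF \<open>finite D\<close>, of f N] phi_apply[OF \<open>finite D\<close>, of g N]
    by (simp add: D_def sum_subtractf left_diff_distrib)
  also have "\<dots> = (f w - g w) * word_img N w (map L w)"
    using \<open>finite D\<close> \<open>w \<in> E\<close> longest
    by (intro sum_word_img_at_longest) (auto simp: E_def)
  finally show False
    using \<open>w \<in> E\<close> word_img_at_letters_neq_0[OF assms] by (simp add: E_def)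
qed

end
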